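(* Let $f(x)$ be a real polynomial of degree $K > 1$ with positive leading coefficient, such that all roots of $f'(x)$ are real. Let $k$ be the number of distinct roots of $f'(x)$ that are not inflection points of $f(x)$, and if $k > 0$ sort them as $\alpha_k < \cdots < \alpha_1$; set $\alpha_0 = +\infty$, $f(\alpha_0) = 1$, $\alpha_{k+1} = -\infty$, $f(\alpha_{k+1}) = (-1)^K$. Then: (I) if $k > 0$, then for $i = 1,\ldots,k$, $\alpha_i$ is a local minimum of $f$ if $i$ is odd and a local maximum of $f$ if $i$ is even; (II) $k$ and $K$ have opposite parity; (III) for each $i = 1,\ldots,k+1$, $f$ is monotone on $(\alpha_i,\alpha_{i-1})$; (IV) for $i = 1,\ldots,k+1$: if $f(\alpha_i)f(\alpha_{i-1}) \geq 0$ then $f$ has no root in $(\alpha_i,\alpha_{i-1})$; if $f(\alpha_i)f(\alpha_{i-1}) < 0$ then $f$ has a unique root in $(\alpha_i,\alpha_{i-1})$, which is either simple or an inflection point of $f$; (V) if every root $\beta$ of $f'$ with $\mathrm{ord}_\beta(f'(x)) > 1$ is also a root of $f$, then for each $i = 1,\ldots,k+1$ with $f(\alpha_i)f(\alpha_{i-1}) \geq 0$, $f'$ has no root in $(\alpha_i,\alpha_{i-1})$; (VI) $f$ has only real roots if and only if $S(-\infty,+\infty) = 1$, where for $x_1 < x_2$ in $\mathbb{R}\cup\{\pm\infty\}$, $S(x_1,x_2) = \sum_{r \in [x_1,x_2)\cap\mathbb{R}} \left(\mathrm{ord}_r(f(x)) - \mathrm{ord}_r(f'(x))\right)$.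
   Context: $\mathrm{ord}_\gamma(f(x))$ denotes the order of vanishing of $f$ at $\gamma$ (zero if $\gamma$ is not a root); only finitely many terms in $S(x_1,x_2)$ are nonzero. *)

theory Defs
  imports "HOL-Analysis.Analysis" "HOL-Computational_Algebra.Polynomial" "HOL-Library.Extended_Real"
begin

definition inflection_point :: "real poly \<Rightarrow> real \<Rightarrow> bool" where
  "inflection_point f x \<longleftrightarrow>
     (\<exists>e>0. \<forall>t s. x - e < t \<and> t < x \<and> x < s \<and> s < x + e \<longrightarrow>
        poly (pderiv (pderiv f)) t * poly (pderiv (pderiv f)) s < 0)"

definition local_min :: "real poly \<Rightarrow> real \<Rightarrow> bool" where
  "local_min f x \<longleftrightarrow> (\<exists>e>0. \<forall>y. \<bar>y - x\<bar> < e \<longrightarrow> poly f x \<le> poly f y)"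

definition local_max :: "real poly \<Rightarrow> real \<Rightarrow> bool" where
  "local_max f x \<longleftrightarrow> (\<exists>e>0. \<forall>y. \<bar>y - x\<bar> < e \<longrightarrow> poly f y \<le> poly f x)"

definition crit_pts :: "real poly \<Rightarrow> real set" where
  "crit_pts f = {x. poly (pderiv f) x = 0 \<and> \<not> inflection_point f x}"

text \<open>alpha_k < ... < alpha_1 (for 1 \<le> i \<le> k), alpha_0 = +inf, alpha_(k+1) = -inf.\<close>
definition alpha :: "real poly \<Rightarrow> nat \<Rightarrow> ereal" where
  "alpha f i = (if i = 0 then PInfty
     else if i \<le> card (crit_pts f)
       then ereal (sorted_list_of_set (crit_pts f) ! (card (crit_pts f) - i))
     else MInfty)"

definition falpha :: "real poly \<Rightarrow> nat \<Rightarrow> real" where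
  "falpha f i = (if i = 0 then 1
     else if i \<le> card (crit_pts f) then poly f (real_of_ereal (alpha f i))
     else (-1) ^ degree f)"

definition alpha_int :: "real poly \<Rightarrow> nat \<Rightarrow> real set" where
  "alpha_int f i = {x. alpha f i < ereal x \<and> ereal x < alpha f (i - 1)}"

text \<open>S(x1,x2) = sum over real r in [x1,x2) of ord_r f - ord_r f' (only roots contribute).\<close>
definition S_sum :: "real poly \<Rightarrow> ereal \<Rightarrow> ereal \<Rightarrow> int" where
  "S_sum f x1 x2 = (\<Sum>r\<in>{r. x1 \<le> ereal r \<and> ereal r < x2 \<and>
        (poly f r = 0 \<or> poly (pderiv f) r = 0)}.
      int (order r f) - int (order r (pderiv f)))"

end

theory Submission
  imports Defs "HOL-Computational_Algebra.Fundamental_Theorem_Algebra"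
begin

(* The roots of f' of odd order are exactly the critical points alpha_i that are not inflection
   points (at a root of f', f'' changes sign iff its order there is odd, i.e. iff the order of f'
   is even).  Since lead_coeff f' > 0, the sign of f' at a non-root x is (-1)^m, where m counts
   the roots of f' of odd order above x; so f' has sign (-1)^(i-1) on (alpha_i, alpha_(i-1)) and
   (-1)^(i-1) f is strictly increasing there.  This gives the local extrema, the monotonicity and,
   with the intermediate value theorem, the roots on each interval; comparing with the sign of
   f' at -infinity gives the parity of k.  Only (VI) uses that f' has only real roots:
   S(-infinity, infinity) is the number of real roots of f minus that of f', counted with
   multiplicity, and the latter is K - 1. *)

section \<open>Sign of a real polynomial\<close>

lemma poly_pos_at_top:
  fixes p :: "real poly"
  assumes "lead_coeff p > 0"
  obtains n where "\<And>x. x \<ge> n \<Longrightarrow> poly p x > 0"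
  using poly_pinfty_gt_lc[OF assms] assms by (meson less_le_trans)

lemma poly_sign_at_bot:
  fixes p :: "real poly"
  assumes "lead_coeff p > 0"
  obtains n where "\<And>x. x \<le> n \<Longrightarrow> (-1) ^ degree p * poly p x > 0"
proof -
  define q where "q = smult ((-1) ^ degree p) (pcompose p [:0, -1:])"
  have "lead_coeff (pcompose p [:0, -1:]) = (-1) ^ degree p * lead_coeff p"
    by (subst lead_coeff_comp) auto
  then have "lead_coeff q = ((-1) ^ degree p * (-1) ^ degree p) * lead_coeff p"
    by (simp add: q_def degree_pcompose)
  then have "lead_coeff q > 0"
    using assms by (simp flip: power_mult_distrib)
  then obtain n where "\<And>y. y \<ge> n \<Longrightarrow> poly q y > 0" using poly_pos_at_top by blast
  then have pos: "\<And>y. y \<ge> n \<Longrightarrow> (-1) ^ degree p * poly p (-y) > 0"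
    by (simp add: q_def poly_pcompose)
  show ?thesis
  proof (rule that[of "-n"])
    fix x :: real assume "x \<le> -n"
    then show "(-1) ^ degree p * poly p x > 0" using pos[of "-x"] by simp
  qed
qed

lemma sgn_poly_no_real_roots:
  fixes p :: "real poly"
  assumes no_roots: "\<And>x. poly p x \<noteq> 0"
  shows "sgn (poly p x) = sgn (lead_coeff p)"
proof -
  have pos: "poly q x > 0"
    if q_no_roots: "\<And>x. poly q x \<noteq> 0" and lc: "lead_coeff q > 0" for q :: "real poly"
  proof (rule ccontr)
    assume "\<not> poly q x > 0"
    then have neg: "poly q x < 0" using q_no_roots[of x] by linarith
    obtain n where n: "\<And>y. y \<ge> n \<Longrightarrow> poly q y > 0" using poly_pos_at_top[OF lc] by blast
    have "x < n" using n[of x] neg by force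
    then show False using poly_IVT[of x n q] neg n[of n] q_no_roots by (auto simp: mult_neg_pos)
  qed
  have "lead_coeff p \<noteq> 0" using no_roots by auto
  then consider "lead_coeff p > 0" | "lead_coeff p < 0" by linarith
  then show ?thesis
  proof cases
    case 1 then show ?thesis using pos[of p] no_roots by simp
  next
    case 2 then show ?thesis using pos[of "-p"] no_roots by simp
  qed
qed

lemma sgn_poly_eq_odd_roots_above:
  fixes p :: "real poly"
  assumes "poly p x \<noteq> 0"
  shows "sgn (poly p x) = sgn (lead_coeff p) * (-1) ^ card {r. x < r \<and> odd (order r p)}"
  using assms
proof (induction p rule: poly_root_order_induct)
  case (no_roots p)
  then have none: "{r. x < r \<and> odd (order r p)} = {}" by (simp add: order_0I)
  show ?case by (subst none) (simp add: sgn_poly_no_real_roots no_roots)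
next
  case (root p a n)
  define q where "q = [:-a, 1:] ^ n * p"
  have p0: "p \<noteq> 0" using root.hyps by auto
  have order_q: "order r q = (if r = a then n else 0) + order r p" for r
    using p0 by (simp add: q_def order_mult order_power_n_n order_0I)
  have "order a p = 0" using root.hyps by (simp add: order_0I)
  then have odd_q: "{r. x < r \<and> odd (order r q)} =
      (if x < a \<and> odd n then insert a else id) {r. x < r \<and> odd (order r p)}"
    by (auto simp: order_q)
  have fin: "finite {r. x < r \<and> odd (order r p)}"
    by (rule finite_subset[OF _ poly_roots_finite[OF p0]]) (auto simp: order_root)
  have "a \<notin> {r. x < r \<and> odd (order r p)}" using \<open>order a p = 0\<close> by simp
  then have card_q: "(-1::real) ^ card {r. x < r \<and> odd (order r q)} =
      (if x < a \<and> odd n then -1 else 1) * (-1) ^ card {r. x < r \<and> odd (order r p)}"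
    using fin by (simp add: odd_q)
  have "x \<noteq> a" using root.prems root.hyps(1) by auto
  then have sgn_factor: "sgn (x - a) ^ n = (if x < a \<and> odd n then -1 else (1::real))"
    by (auto simp: sgn_if)
  have "poly p x \<noteq> 0" using root.prems by simp
  then have "sgn (poly p x) = sgn (lead_coeff p) * (-1) ^ card {r. x < r \<and> odd (order r p)}"
    by (rule root.IH)
  moreover have "sgn (poly q x) = sgn (x - a) ^ n * sgn (poly p x)"
    by (simp add: q_def sgn_mult)
  moreover have "lead_coeff q = lead_coeff p" by (simp add: q_def lead_coeff_mult lead_coeff_power)
  ultimately show ?case by (simp add: q_def[symmetric] sgn_factor card_q)
qed simp

lemma poly_same_sign_near:
  fixes h :: "real poly"
  assumes "poly h a \<noteq> 0"
  obtains d where "d > 0" "\<And>t s. \<bar>t - a\<bar> < d \<Longrightarrow> \<bar>s - a\<bar> < d \<Longrightarrow> poly h t * poly h s > 0"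
proof -
  have "((\<lambda>y. poly h y * poly h a) \<longlongrightarrow> poly h a * poly h a) (nhds a)"
    by (intro tendsto_intros filterlim_ident)
  moreover have "poly h a * poly h a > 0"
    using assms by (simp add: power2_eq_square[symmetric])
  ultimately have "eventually (\<lambda>y. poly h y * poly h a > 0) (nhds a)"
    by (rule order_tendstoD(1))
  then obtain d where d: "d > 0" "\<And>y. \<bar>y - a\<bar> < d \<Longrightarrow> poly h y * poly h a > 0"
    unfolding eventually_nhds_metric dist_real_def by blast
  have "poly h t * poly h s > 0" if "\<bar>t - a\<bar> < d" "\<bar>s - a\<bar> < d" for t s
  proof -
    have "(poly h t * poly h s) * (poly h a * poly h a) > 0"
      using mult_pos_pos[OF d(2)[OF that(1)] d(2)[OF that(2)]] by (simp add: algebra_simps)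
    then show ?thesis by (simp add: zero_less_mult_iff)
  qed
  with d(1) show ?thesis by (rule that)
qed

lemma sign_change_iff_odd_order:
  fixes g :: "real poly"
  assumes "g \<noteq> 0"
  shows "(\<exists>e>0. \<forall>t s. a - e < t \<and> t < a \<and> a < s \<and> s < a + e \<longrightarrow> poly g t * poly g s < 0)
     \<longleftrightarrow> odd (order a g)"
proof -
  define m where "m = order a g"
  obtain h where h: "g = [:-a, 1:] ^ m * h" "\<not> [:-a, 1:] dvd h"
    using order_decomp[OF assms] unfolding m_def by blast
  have "poly h a \<noteq> 0" using h(2) by (simp add: poly_eq_0_iff_dvd)
  then obtain d where d: "d > 0"
    and h_pos: "\<And>t s. \<bar>t - a\<bar> < d \<Longrightarrow> \<bar>s - a\<bar> < d \<Longrightarrow> poly h t * poly h s > 0"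
    using poly_same_sign_near by blast
  have g_prod: "poly g t * poly g s = ((t - a) * (s - a)) ^ m * (poly h t * poly h s)" for t s
    by (simp add: h(1) power_mult_distrib mult_ac)
  show ?thesis
  proof
    assume "\<exists>e>0. \<forall>t s. a - e < t \<and> t < a \<and> a < s \<and> s < a + e \<longrightarrow> poly g t * poly g s < 0"
    then obtain e where e: "e > 0"
      "\<And>t s. a - e < t \<Longrightarrow> t < a \<Longrightarrow> a < s \<Longrightarrow> s < a + e \<Longrightarrow> poly g t * poly g s < 0"
      by blast
    define u where "u = min e d / 2"
    have u: "0 < u" "u < e" "u < d" using e d by (auto simp: u_def)
    have "((- u) * u) ^ m * (poly h (a - u) * poly h (a + u)) < 0"
      using e(2)[of "a - u" "a + u"] u by (simp add: g_prod)
    moreover have "poly h (a - u) * poly h (a + u) > 0" using h_pos u by simp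
    ultimately have "((- u) * u) ^ m < 0"
      using mult_nonneg_nonneg[of "((- u) * u) ^ m" "poly h (a - u) * poly h (a + u)"] by linarith
    then show "odd (order a g)" by (auto simp: m_def)
  next
    assume "odd (order a g)"
    show "\<exists>e>0. \<forall>t s. a - e < t \<and> t < a \<and> a < s \<and> s < a + e \<longrightarrow> poly g t * poly g s < 0"
    proof (intro exI[of _ d] conjI allI impI)
      fix t s assume ts: "a - d < t \<and> t < a \<and> a < s \<and> s < a + d"
      then have "((t - a) * (s - a)) ^ m < 0"
        using \<open>odd (order a g)\<close> by (simp add: m_def mult_less_0_iff)
      moreover have "poly h t * poly h s > 0" using h_pos ts by simp
      ultimately show "poly g t * poly g s < 0" by (simp add: g_prod mult_less_0_iff)
    qed (rule \<open>d > 0\<close>)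
  qed
qed

lemma crit_pts_eq_odd_order:
  fixes f :: "real poly"
  assumes "degree f > 1"
  shows "crit_pts f = {x. odd (order x (pderiv f))}"
proof -
  have p0: "pderiv f \<noteq> 0" and pp0: "pderiv (pderiv f) \<noteq> 0"
    using assms by (auto simp: pderiv_eq_0_iff degree_pderiv)
  have "x \<in> crit_pts f \<longleftrightarrow> odd (order x (pderiv f))" for x
  proof (cases "poly (pderiv f) x = 0")
    case True
    then have "order x (pderiv f) = Suc (order x (pderiv (pderiv f)))"
      by (rule order_pderiv[OF p0])
    moreover have "inflection_point f x \<longleftrightarrow> odd (order x (pderiv (pderiv f)))"
      unfolding inflection_point_def by (rule sign_change_iff_odd_order[OF pp0])
    ultimately show ?thesis using True by (simp add: crit_pts_def)
  qed (simp add: crit_pts_def order_0I)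
  then show ?thesis by blast
qed

lemma simple_root_or_inflection_point:
  fixes f :: "real poly"
  assumes "f \<noteq> 0" "poly f x = 0" "x \<notin> crit_pts f"
  shows "order x f = 1 \<or> inflection_point f x"
proof (cases "poly (pderiv f) x = 0")
  case False
  then show ?thesis using order_pderiv[OF assms(1,2)] by (simp add: order_0I)
qed (use assms(3) in \<open>simp add: crit_pts_def\<close>)

section \<open>Monotonicity and zeros on an interval\<close>

lemma poly_le_if_pderiv_nonneg:
  fixes g :: "real poly"
  assumes "a \<le> b" "\<And>y. a < y \<Longrightarrow> y < b \<Longrightarrow> poly (pderiv g) y \<ge> 0"
  shows "poly g a \<le> poly g b"
proof (cases "a = b")
  case False
  with assms(1) have "a < b" by simp
  then obtain y where "a < y" "y < b" "poly g b - poly g a = (b - a) * poly (pderiv g) y"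
    using poly_MVT by blast
  moreover have "(b - a) * poly (pderiv g) y \<ge> 0" using \<open>a < b\<close> assms(2) calculation by simp
  ultimately show ?thesis by linarith
qed simp

lemma poly_less_if_pderiv_nonneg:
  fixes g :: "real poly"
  assumes "degree g \<noteq> 0" "a < b" "\<And>y. a < y \<Longrightarrow> y < b \<Longrightarrow> poly (pderiv g) y \<ge> 0"
  shows "poly g a < poly g b"
proof (rule ccontr)
  have mono: "poly g s \<le> poly g t" if "a \<le> s" "s \<le> t" "t \<le> b" for s t
    using poly_le_if_pderiv_nonneg[of s t g] assms(3) that by simp
  assume "\<not> poly g a < poly g b"
  then have "poly (g - [:poly g a:]) y = 0" if "y \<in> {a..b}" for y
    using mono[of a y] mono[of y b] that by simp
  then have "{a..b} \<subseteq> {y. poly (g - [:poly g a:]) y = 0}" by blast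
  moreover have "g - [:poly g a:] \<noteq> 0"
    using assms(1) by (metis degree_pCons_0 eq_iff_diff_eq_0)
  ultimately have "finite {a..b}" using poly_roots_finite finite_subset by blast
  then show False using assms(2) infinite_Icc by blast
qed

lemma local_min_if_pderiv_sign_change:
  fixes g :: "real poly"
  assumes "e > 0"
    and left: "\<And>y. a - e < y \<Longrightarrow> y < a \<Longrightarrow> poly (pderiv g) y \<le> 0"
    and right: "\<And>y. a < y \<Longrightarrow> y < a + e \<Longrightarrow> poly (pderiv g) y \<ge> 0"
  shows "local_min g a"
  unfolding local_min_def
proof (intro exI[of _ e] conjI allI impI)
  fix y assume y: "\<bar>y - a\<bar> < e"
  show "poly g a \<le> poly g y"
  proof (cases "y \<le> a")
    case True
    have "poly (-g) y \<le> poly (-g) a"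
      by (rule poly_le_if_pderiv_nonneg) (use True y left in \<open>auto simp: pderiv_minus\<close>)
    then show ?thesis by simp
  next
    case False
    show ?thesis by (rule poly_le_if_pderiv_nonneg) (use False y right in auto)
  qed
qed (rule \<open>e > 0\<close>)

lemma local_max_iff_local_min_uminus: "local_max g a \<longleftrightarrow> local_min (-g) a"
  by (simp add: local_max_def local_min_def)

lemma unique_zero_strict_mono_between:
  fixes g :: "real \<Rightarrow> real" and lo hi :: ereal
  defines "J \<equiv> {x. lo \<le> ereal x \<and> ereal x \<le> hi}"
  assumes cont: "continuous_on UNIV g" and mono: "strict_mono_on J g"
    and a: "a \<in> J" "g a < 0" and b: "b \<in> J" "g b > 0"
  shows "\<exists>!x. lo < ereal x \<and> ereal x < hi \<and> g x = 0"
proof -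
  have "a < b"
  proof (rule ccontr)
    assume "\<not> a < b"
    then have "g b \<le> g a" using strict_mono_on_leD[OF mono b(1) a(1)] by simp
    then show False using a(2) b(2) by simp
  qed
  then obtain x where x: "a \<le> x" "x \<le> b" "g x = 0"
    using IVT'[of g a 0 b] a(2) b(2) continuous_on_subset[OF cont] by auto
  then have "a < x" "x < b" using a(2) b(2) by (auto simp: order.order_iff_strict)
  moreover have "lo \<le> ereal a" "ereal b \<le> hi" using a(1) b(1) by (auto simp: J_def)
  ultimately have x_between: "lo < ereal x" "ereal x < hi"
    by (auto intro: le_less_trans[of lo "ereal a"] less_le_trans[of _ "ereal b" hi])
  have "y = x" if "lo < ereal y" "ereal y < hi" "g y = 0" for y
    by (rule strict_mono_on_eqD[OF mono]) (use that x(3) x_between in \<open>auto simp: J_def\<close>)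
  then show ?thesis using x(3) x_between by blast
qed

(* vL and vU play the role of the values of g at the two ends: the actual value at a finite end,
   and at an infinite end any value whose sign g takes somewhere inside the interval. *)

lemma zeros_of_strict_mono_between:
  fixes g :: "real \<Rightarrow> real" and lo hi :: ereal
  defines "I \<equiv> {x. lo < ereal x \<and> ereal x < hi}"
  assumes lohi: "lo < hi" and cont: "continuous_on UNIV g"
    and mono: "strict_mono_on {x. lo \<le> ereal x \<and> ereal x \<le> hi} g"
    and lower: "(\<exists>l. lo = ereal l \<and> vL = g l) \<or> (vL < 0 \<and> (\<exists>x\<in>I. g x < 0))"
    and upper: "(\<exists>u. hi = ereal u \<and> vU = g u) \<or> (vU > 0 \<and> (\<exists>x\<in>I. g x > 0))"
  shows "vL * vU \<ge> 0 \<Longrightarrow> \<forall>x\<in>I. g x \<noteq> 0"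
    and "vL * vU < 0 \<Longrightarrow> \<exists>!x. x \<in> I \<and> g x = 0"
proof -
  have pos: "g x > 0" if vL: "vL \<ge> 0" and x: "x \<in> I" for x
  proof -
    obtain l where "lo = ereal l" "vL = g l" using lower vL by auto
    moreover from this have "g l < g x"
      using x lohi by (intro strict_mono_onD[OF mono]) (auto simp: I_def)
    ultimately show ?thesis using vL by simp
  qed
  have neg: "g x < 0" if vU: "vU \<le> 0" and x: "x \<in> I" for x
  proof -
    obtain u where "hi = ereal u" "vU = g u" using upper vU by auto
    moreover from this have "g x < g u"
      using x lohi by (intro strict_mono_onD[OF mono]) (auto simp: I_def)
    ultimately show ?thesis using vU by simp
  qed
  show "vL * vU \<ge> 0 \<Longrightarrow> \<forall>x\<in>I. g x \<noteq> 0"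
  proof (intro ballI notI)
    fix x assume "vL * vU \<ge> 0" "x \<in> I" "g x = 0"
    then have "vL < 0" "vU > 0" using pos[of x] neg[of x] by force+
    then have "vL * vU < 0" by (rule mult_neg_pos)
    with \<open>vL * vU \<ge> 0\<close> show False by simp
  qed
  assume "vL * vU < 0"
  obtain x0 where "x0 \<in> I" using ereal_dense2[OF lohi] by (auto simp: I_def)
  then have "vL < 0" "vU > 0"
    using \<open>vL * vU < 0\<close> pos[OF _ \<open>x0 \<in> I\<close>] neg[OF _ \<open>x0 \<in> I\<close>]
    by (auto simp: mult_less_0_iff)
  obtain a where "lo \<le> ereal a" "ereal a \<le> hi" "g a < 0"
  proof (cases "\<exists>l. lo = ereal l \<and> vL = g l")
    case True
    then show ?thesis using that lohi \<open>vL < 0\<close> by (auto intro: less_imp_le)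
  next
    case False
    then show ?thesis using that lower \<open>vL < 0\<close> by (auto simp: I_def intro: less_imp_le)
  qed
  moreover obtain b where "lo \<le> ereal b" "ereal b \<le> hi" "g b > 0"
  proof (cases "\<exists>u. hi = ereal u \<and> vU = g u")
    case True
    then show ?thesis using that lohi \<open>vU > 0\<close> by (auto intro: less_imp_le)
  next
    case False
    then show ?thesis using that upper \<open>vU > 0\<close> by (auto simp: I_def intro: less_imp_le)
  qed
  ultimately show "\<exists>!x. x \<in> I \<and> g x = 0"
    unfolding I_def using unique_zero_strict_mono_between[OF cont mono, of a b] by simp
qed

lemma sorted_gap_card_greater:
  fixes xs :: "real list"
  assumes sorted: "sorted_wrt (<) xs" and i: "1 \<le> i" "i \<le> length xs + 1"
    and lo: "i \<le> length xs \<Longrightarrow> xs ! (length xs - i) < x"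
    and hi: "2 \<le> i \<Longrightarrow> x < xs ! (length xs + 1 - i)"
  shows "x \<notin> set xs" and "card {c \<in> set xs. x < c} = i - 1"
proof -
  define k where "k = length xs"
  have "sorted xs" "distinct xs" using sorted by (auto simp: strict_sorted_iff)
  have below: "xs ! j < x" if "j + i \<le> k" for j
  proof -
    have "xs ! j \<le> xs ! (k - i)"
      by (rule sorted_nth_mono[OF \<open>sorted xs\<close>]) (use that i in \<open>auto simp: k_def\<close>)
    also have "\<dots> < x" using lo that by (simp add: k_def)
    finally show ?thesis .
  qed
  have above: "x < xs ! j" if "j < k" "k + 1 \<le> j + i" for j
  proof -
    have "x < xs ! (k + 1 - i)" using hi that by (simp add: k_def)
    also have "\<dots> \<le> xs ! j"
      by (rule sorted_nth_mono[OF \<open>sorted xs\<close>]) (use that i in \<open>auto simp: k_def\<close>)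
    finally show ?thesis .
  qed
  have set_xs: "set xs = (!) xs ` {..<k}" by (auto simp: k_def set_conv_nth)
  show "x \<notin> set xs"
  proof
    assume "x \<in> set xs"
    then obtain j where "j < k" "xs ! j = x" using set_xs by auto
    then show False using below[of j] above[of j] by (cases "j + i \<le> k") auto
  qed
  have "{c \<in> set xs. x < c} = (!) xs ` {k + 1 - i..<k}"
  proof (intro set_eqI iffI)
    fix c assume "c \<in> {c \<in> set xs. x < c}"
    then obtain j where "j < k" "c = xs ! j" "x < c" using set_xs by auto
    moreover from this have "k + 1 \<le> j + i" using below[of j] by (cases "j + i \<le> k") auto
    ultimately show "c \<in> (!) xs ` {k + 1 - i..<k}" by auto
  qed (use above i in \<open>auto simp: k_def\<close>)
  moreover have "inj_on ((!) xs) {k + 1 - i..<k}"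
    using inj_on_nth[OF \<open>distinct xs\<close>] by (auto simp: k_def)
  ultimately show "card {c \<in> set xs. x < c} = i - 1"
    using i by (simp add: card_image k_def)
qed

section \<open>Counting real roots\<close>

lemma map_poly_of_real_mult:
  "map_poly (of_real :: real \<Rightarrow> 'a::{real_algebra_1, comm_ring_1}) (p * q) =
     map_poly of_real p * map_poly of_real q"
  by (rule poly_eqI) (simp add: coeff_map_poly coeff_mult of_real_sum)

lemma poly_map_poly_of_real:
  "poly (map_poly of_real p) (of_real x) = (of_real (poly p x) :: 'a::{real_algebra_1, comm_semiring_0})"
  by (induction p) (auto simp: map_poly_pCons)

lemma poly_eq_prod_proots_times_no_roots:
  fixes p :: "'a::idom poly"
  assumes "p \<noteq> 0"
  obtains q where "p = (\<Prod>x\<in>#proots p. [:-x, 1:]) * q" "\<And>x. poly q x \<noteq> 0"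
proof -
  have "\<exists>q. p = (\<Prod>x\<in>#proots p. [:-x, 1:]) * q \<and> (\<forall>x. poly q x \<noteq> 0)"
    using assms
  proof (induction p rule: poly_root_order_induct)
    case (no_roots p)
    then have "proots p = {#}" by (simp add: multiset_eqI order_root)
    then show ?case using no_roots by auto
  next
    case (root p x n)
    then obtain q where q: "p = (\<Prod>x\<in>#proots p. [:-x, 1:]) * q" "\<forall>x. poly q x \<noteq> 0"
      by auto
    have "proots ([:-x, 1:] ^ n * p) = replicate_mset n x + proots p"
      using root.prems by (simp add: proots_mult proots_power)
    moreover have "(\<Prod>y\<in>#replicate_mset n x. [:-y, 1:]) = [:-x, 1:] ^ n"
      by (induction n) auto
    ultimately show ?case using q by (intro exI[of _ q]) (simp add: mult.assoc)
  qed simp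
  then show ?thesis using that by blast
qed

lemma degree_prod_linear_factors: "degree (\<Prod>x\<in>#M. [:-x, 1::'a::idom:]) = size M"
proof (induction M)
  case (add x M)
  have "(\<Prod>x\<in>#M. [:-x, 1::'a:]) \<noteq> 0" by (auto simp: prod_mset_zero_iff)
  then show ?case using add.IH by (simp add: degree_mult_eq del: mult_pCons_left)
qed simp

lemma poly_map_poly_of_real_prod_linear_factors:
  "poly (map_poly of_real (\<Prod>x\<in>#M. [:-x, 1:])) z = (\<Prod>x\<in>#M. z - of_real x :: complex)"
  by (induction M) (simp_all add: map_poly_of_real_mult map_poly_pCons map_poly_1 del: mult_pCons_left)

lemma all_roots_real_iff_degree_cofactor:
  fixes p q :: "real poly"
  assumes p: "p = (\<Prod>x\<in>#M. [:-x, 1:]) * q" and no_roots: "\<And>x. poly q x \<noteq> 0"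
  shows "(\<forall>z::complex. poly (map_poly of_real p) z = 0 \<longrightarrow> z \<in> \<real>) \<longleftrightarrow> degree q = 0"
proof
  assume real: "\<forall>z::complex. poly (map_poly of_real p) z = 0 \<longrightarrow> z \<in> \<real>"
  show "degree q = 0"
  proof (rule ccontr)
    assume "degree q \<noteq> 0"
    then have "\<not> constant (poly (map_poly (of_real :: real \<Rightarrow> complex) q))"
      by (simp add: constant_degree degree_map_poly)
    then obtain z :: complex where z: "poly (map_poly of_real q) z = 0"
      using fundamental_theorem_of_algebra by blast
    then have "z \<in> \<real>" using real by (simp add: p map_poly_of_real_mult)
    then obtain x where "z = of_real x" by (auto elim: Reals_cases)
    then show False using z no_roots[of x] by (simp add: poly_map_poly_of_real)
  qed
next
  assume "degree q = 0"
  then obtain c where c: "q = [:c:]" by (auto elim: degree_eq_zeroE)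
  then have "c \<noteq> 0" using no_roots by auto
  show "\<forall>z::complex. poly (map_poly of_real p) z = 0 \<longrightarrow> z \<in> \<real>"
  proof (intro allI impI)
    fix z :: complex assume "poly (map_poly of_real p) z = 0"
    then have "(\<Prod>x\<in>#M. z - of_real x) = 0"
      using \<open>c \<noteq> 0\<close> by (simp add: p c map_poly_of_real_mult poly_map_poly_of_real_prod_linear_factors
          map_poly_pCons del: mult_pCons_right)
    then obtain x where "z = of_real x" by (auto simp: prod_mset_zero_iff)
    then show "z \<in> \<real>" by simp
  qed
qed

lemma all_roots_real_iff_size_proots:
  fixes p :: "real poly"
  assumes "p \<noteq> 0"
  shows "(\<forall>z::complex. poly (map_poly of_real p) z = 0 \<longrightarrow> z \<in> \<real>) \<longleftrightarrow> size (proots p) = degree p"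
proof -
  obtain q where q: "p = (\<Prod>x\<in>#proots p. [:-x, 1:]) * q" "\<And>x. poly q x \<noteq> 0"
    using poly_eq_prod_proots_times_no_roots[OF assms] by blast
  then have "q \<noteq> 0" "(\<Prod>x\<in>#proots p. [:-x, 1:]) \<noteq> 0" using assms by auto
  then have "degree p = size (proots p) + degree q"
    using arg_cong[OF q(1), of degree] by (simp add: degree_mult_eq degree_prod_linear_factors)
  then show ?thesis using all_roots_real_iff_degree_cofactor[OF q] by simp
qed

lemma size_proots_eq_sum_order:
  fixes p :: "'a::idom poly"
  assumes "p \<noteq> 0" "finite R" "{r. poly p r = 0} \<subseteq> R"
  shows "size (proots p) = (\<Sum>r\<in>R. order r p)"
proof -
  have "size (proots p) = (\<Sum>r\<in>set_mset (proots p). order r p)"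
    using assms(1) by (simp add: size_multiset_overloaded_eq)
  also have "\<dots> = (\<Sum>r\<in>R. order r p)"
    by (rule sum.mono_neutral_left) (use assms in \<open>auto simp: order_root\<close>)
  finally show ?thesis .
qed

lemma S_sum_MInfty_PInfty:
  fixes f :: "real poly"
  assumes "f \<noteq> 0" "pderiv f \<noteq> 0"
  shows "S_sum f MInfty PInfty = int (size (proots f)) - int (size (proots (pderiv f)))"
proof -
  define R where "R = {r. poly f r = 0 \<or> poly (pderiv f) r = 0}"
  have "finite R"
    using poly_roots_finite[OF assms(1)] poly_roots_finite[OF assms(2)]
    by (simp add: R_def Collect_disj_eq)
  then have "size (proots f) = (\<Sum>r\<in>R. order r f)"
    and "size (proots (pderiv f)) = (\<Sum>r\<in>R. order r (pderiv f))"
    using assms by (auto intro!: size_proots_eq_sum_order simp: R_def)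
  moreover have "S_sum f MInfty PInfty = (\<Sum>r\<in>R. int (order r f) - int (order r (pderiv f)))"
    by (simp add: S_sum_def R_def)
  ultimately show ?thesis by (simp add: sum_subtractf)
qed

section \<open>The critical points of f\<close>

lemma alpha_0 [simp]: "alpha f 0 = PInfty"
  by (simp add: alpha_def)

locale crit_poly =
  fixes f :: "real poly"
  assumes degree_gt_1: "degree f > 1" and lead_coeff_pos: "lead_coeff f > 0"
begin

lemma f_nonzero: "f \<noteq> 0"
  using degree_gt_1 by auto

lemma pderiv_nonzero: "pderiv f \<noteq> 0"
  using degree_gt_1 by (simp add: pderiv_eq_0_iff)

lemma lead_coeff_pderiv_pos: "lead_coeff (pderiv f) > 0"
  using degree_gt_1 lead_coeff_pos by (simp add: degree_pderiv coeff_pderiv)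

lemma finite_crit_pts: "finite (crit_pts f)"
  by (rule finite_subset[OF _ poly_roots_finite[OF pderiv_nonzero]]) (auto simp: crit_pts_def)

lemma sgn_pderiv:
  assumes "poly (pderiv f) x \<noteq> 0"
  shows "sgn (poly (pderiv f) x) = (-1) ^ card {c \<in> crit_pts f. x < c}"
proof -
  have "{c \<in> crit_pts f. x < c} = {r. x < r \<and> odd (order r (pderiv f))}"
    using crit_pts_eq_odd_order[OF degree_gt_1] by auto
  then show ?thesis
    using sgn_poly_eq_odd_roots_above[OF assms] lead_coeff_pderiv_pos by simp
qed

lemma exists_below_crit_pts:
  obtains x where "x \<le> n" "\<And>c. c \<in> crit_pts f \<Longrightarrow> x < c"
proof (rule that[of "Min (insert n (crit_pts f)) - 1"])
  have "Min (insert n (crit_pts f)) \<le> y" if "y \<in> insert n (crit_pts f)" for y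
    using finite_crit_pts that by simp
  then show "Min (insert n (crit_pts f)) - 1 \<le> n"
    and "\<And>c. c \<in> crit_pts f \<Longrightarrow> Min (insert n (crit_pts f)) - 1 < c" by force+
qed

lemma exists_above_crit_pts:
  obtains x where "x \<ge> n" "\<And>c. c \<in> crit_pts f \<Longrightarrow> c < x"
proof (rule that[of "Max (insert n (crit_pts f)) + 1"])
  have "y \<le> Max (insert n (crit_pts f))" if "y \<in> insert n (crit_pts f)" for y
    using finite_crit_pts that by simp
  then show "n \<le> Max (insert n (crit_pts f)) + 1"
    and "\<And>c. c \<in> crit_pts f \<Longrightarrow> c < Max (insert n (crit_pts f)) + 1" by force+
qed

lemma odd_card_crit_pts_plus_degree: "odd (card (crit_pts f) + degree f)"
proof -
  obtain n where n: "\<And>x. x \<le> n \<Longrightarrow> (-1) ^ degree (pderiv f) * poly (pderiv f) x > 0"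
    using poly_sign_at_bot[OF lead_coeff_pderiv_pos] by blast
  obtain x where "x \<le> n" and below: "\<And>c. c \<in> crit_pts f \<Longrightarrow> x < c"
    using exists_below_crit_pts by blast
  have pos: "(-1) ^ degree (pderiv f) * poly (pderiv f) x > 0" using n \<open>x \<le> n\<close> by blast
  then have "sgn (poly (pderiv f) x) = (-1) ^ degree (pderiv f)"
    by (auto simp: minus_one_power_iff split: if_splits)
  moreover have "{c \<in> crit_pts f. x < c} = crit_pts f" using below by auto
  ultimately have "(-1::real) ^ card (crit_pts f) = (-1) ^ (degree f - 1)"
    using sgn_pderiv[of x] pos by (fastforce simp: degree_pderiv)
  then show ?thesis using degree_gt_1 by (cases "degree f") (auto simp: minus_one_power_iff split: if_splits)
qed

lemma alpha_crit_pt: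
  assumes "i \<in> {1..card (crit_pts f)}"
  obtains c where "c \<in> crit_pts f" "alpha f i = ereal c" "falpha f i = poly f c"
proof -
  let ?xs = "sorted_list_of_set (crit_pts f)"
  have "?xs ! (card (crit_pts f) - i) \<in> set ?xs"
    using assms by (intro nth_mem) auto
  then show ?thesis
    using assms finite_crit_pts by (intro that) (auto simp: alpha_def falpha_def)
qed

lemma alpha_less:
  assumes "i \<in> {1..card (crit_pts f) + 1}"
  shows "alpha f i < alpha f (i - 1)"
proof -
  let ?xs = "sorted_list_of_set (crit_pts f)" and ?k = "card (crit_pts f)"
  consider "i = 1" | "2 \<le> i" "i \<le> ?k" | "2 \<le> i" "i = ?k + 1"
    using assms by (cases "i = 1"; cases "i \<le> ?k") auto
  then show ?thesis
  proof cases
    case 2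
    then have "?xs ! (?k - i) < ?xs ! (?k - (i - 1))"
      by (intro sorted_wrt_nth_less[OF strict_sorted_list_of_set]) auto
    then show ?thesis using 2 by (simp add: alpha_def)
  qed (auto simp: alpha_def)
qed

lemma alpha_int_crit_count:
  assumes "i \<in> {1..card (crit_pts f) + 1}" "x \<in> alpha_int f i"
  shows "x \<notin> crit_pts f" and "card {c \<in> crit_pts f. x < c} = i - 1"
proof -
  let ?xs = "sorted_list_of_set (crit_pts f)" and ?k = "card (crit_pts f)"
  have "?xs ! (length ?xs - i) < x" if "i \<le> length ?xs"
    using assms that by (simp add: alpha_int_def alpha_def)
  moreover have "x < ?xs ! (length ?xs + 1 - i)" if "2 \<le> i"
  proof -
    have "alpha f (i - 1) = ereal (?xs ! (?k + 1 - i))"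
      using assms(1) that by (simp add: alpha_def Suc_diff_le)
    then show ?thesis using assms(2) by (simp add: alpha_int_def)
  qed
  moreover have "sorted_wrt (<) ?xs" by (rule strict_sorted_list_of_set)
  ultimately show "x \<notin> crit_pts f" "card {c \<in> crit_pts f. x < c} = i - 1"
    using sorted_gap_card_greater[of ?xs i x] assms(1) finite_crit_pts by auto
qed

lemma mem_alpha_int_first:
  assumes "\<And>c. c \<in> crit_pts f \<Longrightarrow> c < x"
  shows "x \<in> alpha_int f 1"
proof (cases "card (crit_pts f) = 0")
  case False
  then obtain c where "c \<in> crit_pts f" "alpha f 1 = ereal c"
    using alpha_crit_pt[of 1] by auto
  then show ?thesis using assms by (simp add: alpha_int_def)
qed (simp add: alpha_int_def alpha_def)

lemma mem_alpha_int_last: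
  assumes "\<And>c. c \<in> crit_pts f \<Longrightarrow> x < c"
  shows "x \<in> alpha_int f (card (crit_pts f) + 1)"
proof (cases "card (crit_pts f) = 0")
  case False
  then obtain c where "c \<in> crit_pts f" "alpha f (card (crit_pts f)) = ereal c"
    using alpha_crit_pt[of "card (crit_pts f)"] by auto
  then show ?thesis using assms by (simp add: alpha_int_def alpha_def)
qed (simp add: alpha_int_def alpha_def)

lemma pderiv_sign_on_alpha_int:
  assumes "i \<in> {1..card (crit_pts f) + 1}" "x \<in> alpha_int f i"
  shows "(-1) ^ (i - 1) * poly (pderiv f) x \<ge> 0"
proof (cases "poly (pderiv f) x = 0")
  case False
  then have sgn_eq: "sgn (poly (pderiv f) x) = (-1) ^ (i - 1)"
    using sgn_pderiv alpha_int_crit_count(2)[OF assms] by simp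
  show ?thesis unfolding sgn_eq[symmetric] by (simp add: sgn_if)
qed simp

lemma strict_mono_on_alpha_closure:
  assumes "i \<in> {1..card (crit_pts f) + 1}"
  shows "strict_mono_on {x. alpha f i \<le> ereal x \<and> ereal x \<le> alpha f (i - 1)}
    (\<lambda>x. (-1) ^ (i - 1) * poly f x)"
proof (rule strict_mono_onI)
  fix r s assume r: "r \<in> {x. alpha f i \<le> ereal x \<and> ereal x \<le> alpha f (i - 1)}"
    and s: "s \<in> {x. alpha f i \<le> ereal x \<and> ereal x \<le> alpha f (i - 1)}" and "r < s"
  have "poly (smult ((-1) ^ (i - 1)) f) r < poly (smult ((-1) ^ (i - 1)) f) s"
  proof (rule poly_less_if_pderiv_nonneg)
    show "degree (smult ((-1) ^ (i - 1)) f) \<noteq> 0" using degree_gt_1 by simp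
    fix y assume "r < y" "y < s"
    then have "y \<in> alpha_int f i"
      using r s le_less_trans[of "alpha f i" "ereal r" "ereal y"]
        less_le_trans[of "ereal y" "ereal s" "alpha f (i - 1)"]
      by (simp add: alpha_int_def)
    then show "poly (pderiv (smult ((-1) ^ (i - 1)) f)) y \<ge> 0"
      using pderiv_sign_on_alpha_int[OF assms] by (simp add: pderiv_smult)
  qed (rule \<open>r < s\<close>)
  then show "(-1) ^ (i - 1) * poly f r < (-1) ^ (i - 1) * poly f s" by simp
qed

lemma mono_or_antimono_on_alpha_int:
  assumes "i \<in> {1..card (crit_pts f) + 1}"
  shows "mono_on (alpha_int f i) (poly f) \<or> antimono_on (alpha_int f i) (poly f)"
proof -
  have smono: "strict_mono_on (alpha_int f i) (\<lambda>x. (-1) ^ (i - 1) * poly f x)"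
    by (rule monotone_on_subset[OF strict_mono_on_alpha_closure[OF assms]])
      (auto simp: alpha_int_def)
  show ?thesis
  proof (cases "even (i - 1)")
    case True
    then have "mono_on (alpha_int f i) (poly f)"
      using strict_mono_on_leD[OF smono] by (auto intro!: mono_onI)
    then show ?thesis ..
  next
    case False
    then have "antimono_on (alpha_int f i) (poly f)"
      using strict_mono_on_leD[OF smono] by (auto intro!: monotone_onI)
    then show ?thesis ..
  qed
qed

lemma alpha_local_extremum:
  assumes "i \<in> {1..card (crit_pts f)}"
  shows "(odd i \<longrightarrow> local_min f (real_of_ereal (alpha f i))) \<and>
    (even i \<longrightarrow> local_max f (real_of_ereal (alpha f i)))"
proof -
  obtain a where a: "alpha f i = ereal a" using alpha_crit_pt[OF assms] by blast
  have i: "i \<in> {1..card (crit_pts f) + 1}" "i + 1 \<in> {1..card (crit_pts f) + 1}"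
    using assms by auto
  have "alpha f (i + 1) < ereal a" "ereal a < alpha f (i - 1)"
    using alpha_less[OF i(1)] alpha_less[OF i(2)] a by auto
  then obtain l u where lu: "alpha f (i + 1) < ereal l" "ereal l < ereal a"
    "ereal a < ereal u" "ereal u < alpha f (i - 1)"
    using ereal_dense2 by metis
  define e where "e = min (a - l) (u - a)"
  define \<sigma> where "\<sigma> = (-1::real) ^ (i - 1)"
  have "local_min (smult \<sigma> f) a"
  proof (rule local_min_if_pderiv_sign_change)
    show "e > 0" using lu by (simp add: e_def)
  next
    fix y assume "a - e < y" "y < a"
    then have "y \<in> alpha_int f (i + 1)"
      using lu a le_less_trans[of "alpha f (i + 1)" "ereal l" "ereal y"] by (simp add: alpha_int_def e_def)
    then have "(-1) ^ i * poly (pderiv f) y \<ge> 0" using pderiv_sign_on_alpha_int[OF i(2)] by simp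
    moreover have "\<sigma> = - ((-1) ^ i)" using assms by (cases i) (auto simp: \<sigma>_def)
    ultimately show "poly (pderiv (smult \<sigma> f)) y \<le> 0" by (simp add: pderiv_smult pderiv_minus)
  next
    fix y assume "a < y" "y < a + e"
    then have "y \<in> alpha_int f i"
      using lu a less_le_trans[of "ereal y" "ereal u" "alpha f (i - 1)"] by (simp add: alpha_int_def e_def)
    then show "poly (pderiv (smult \<sigma> f)) y \<ge> 0"
      using pderiv_sign_on_alpha_int[OF i(1)] by (simp add: pderiv_smult \<sigma>_def)
  qed
  moreover have "\<sigma> = (if odd i then 1 else -1)" using assms by (auto simp: \<sigma>_def)
  ultimately show ?thesis
    by (auto simp: a local_max_iff_local_min_uminus smult_minus_left[symmetric])
qed

lemma lower_end_sign:
  assumes "i \<in> {1..card (crit_pts f) + 1}"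
  shows "(\<exists>l. alpha f i = ereal l \<and> (-1) ^ (i - 1) * falpha f i = (-1) ^ (i - 1) * poly f l) \<or>
    ((-1) ^ (i - 1) * falpha f i < 0 \<and> (\<exists>x\<in>alpha_int f i. (-1) ^ (i - 1) * poly f x < 0))"
proof (cases "i \<le> card (crit_pts f)")
  case True
  then obtain c where "alpha f i = ereal c" "falpha f i = poly f c"
    using alpha_crit_pt assms by (metis atLeastAtMost_iff)
  then show ?thesis by auto
next
  case False
  then have i: "i = card (crit_pts f) + 1" using assms by auto
  obtain n where n: "\<And>x. x \<le> n \<Longrightarrow> (-1) ^ degree f * poly f x > 0"
    using poly_sign_at_bot[OF lead_coeff_pos] by blast
  obtain x where "x \<le> n" "\<And>c. c \<in> crit_pts f \<Longrightarrow> x < c"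
    using exists_below_crit_pts by blast
  then have "x \<in> alpha_int f i" "(-1) ^ degree f * poly f x > 0"
    using mem_alpha_int_last n i by auto
  moreover have "(-1::real) ^ (i - 1) = - ((-1) ^ degree f)"
    using odd_card_crit_pts_plus_degree i by (auto simp: minus_one_power_iff)
  moreover have "falpha f i = (-1) ^ degree f" using i by (simp add: falpha_def)
  ultimately show ?thesis by auto
qed

lemma upper_end_sign:
  assumes "i \<in> {1..card (crit_pts f) + 1}"
  shows "(\<exists>u. alpha f (i - 1) = ereal u \<and> (-1) ^ (i - 1) * falpha f (i - 1) = (-1) ^ (i - 1) * poly f u) \<or>
    ((-1) ^ (i - 1) * falpha f (i - 1) > 0 \<and> (\<exists>x\<in>alpha_int f i. (-1) ^ (i - 1) * poly f x > 0))"
proof (cases "i = 1")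
  case False
  then have "i - 1 \<in> {1..card (crit_pts f)}" using assms by auto
  then obtain c where "alpha f (i - 1) = ereal c" "falpha f (i - 1) = poly f c"
    by (rule alpha_crit_pt)
  then show ?thesis by auto
next
  case True
  obtain n where n: "\<And>x. x \<ge> n \<Longrightarrow> poly f x > 0"
    using poly_pos_at_top[OF lead_coeff_pos] by blast
  obtain x where "x \<ge> n" "\<And>c. c \<in> crit_pts f \<Longrightarrow> c < x"
    using exists_above_crit_pts by blast
  then have "x \<in> alpha_int f 1" "poly f x > 0" using mem_alpha_int_first n by auto
  then show ?thesis using True by (auto simp: falpha_def)
qed

lemma zeros_on_alpha_int:
  assumes "i \<in> {1..card (crit_pts f) + 1}"
  shows "falpha f i * falpha f (i - 1) \<ge> 0 \<Longrightarrow> \<forall>x\<in>alpha_int f i. poly f x \<noteq> 0"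
    and "falpha f i * falpha f (i - 1) < 0 \<Longrightarrow> \<exists>!x. x \<in> alpha_int f i \<and> poly f x = 0"
proof -
  let ?\<sigma> = "(-1::real) ^ (i - 1)"
  have "continuous_on UNIV (\<lambda>x. ?\<sigma> * poly f x)" by (intro continuous_intros)
  note zeros = zeros_of_strict_mono_between[OF alpha_less[OF assms] this
      strict_mono_on_alpha_closure[OF assms] lower_end_sign[OF assms, unfolded alpha_int_def]
      upper_end_sign[OF assms, unfolded alpha_int_def], folded alpha_int_def]
  have "(?\<sigma> * falpha f i) * (?\<sigma> * falpha f (i - 1)) = falpha f i * falpha f (i - 1)"
    by (simp add: algebra_simps flip: power_add)
  note zeros = zeros[unfolded this]
  show "falpha f i * falpha f (i - 1) \<ge> 0 \<Longrightarrow> \<forall>x\<in>alpha_int f i. poly f x \<noteq> 0"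
    and "falpha f i * falpha f (i - 1) < 0 \<Longrightarrow> \<exists>!x. x \<in> alpha_int f i \<and> poly f x = 0"
    using zeros by simp_all
qed

lemma pderiv_nonzero_on_alpha_int:
  assumes multiple_roots: "\<forall>\<beta>. poly (pderiv f) \<beta> = 0 \<and> order \<beta> (pderiv f) > 1 \<longrightarrow> poly f \<beta> = 0"
    and i: "i \<in> {1..card (crit_pts f) + 1}" and same_sign: "falpha f i * falpha f (i - 1) \<ge> 0"
    and x: "x \<in> alpha_int f i"
  shows "poly (pderiv f) x \<noteq> 0"
proof
  assume root: "poly (pderiv f) x = 0"
  have "x \<notin> crit_pts f" by (rule alpha_int_crit_count(1)[OF i x])
  then have "even (order x (pderiv f))" using crit_pts_eq_odd_order[OF degree_gt_1] by auto
  moreover have "order x (pderiv f) \<noteq> 0" using root pderiv_nonzero by (simp add: order_root)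
  ultimately have "order x (pderiv f) > 1" by presburger
  then have "poly f x = 0" using multiple_roots root by blast
  then show False using zeros_on_alpha_int(1)[OF i same_sign] x by blast
qed

end

theorem lemmaA2:
  fixes f :: "real poly" and K :: nat
  assumes deg: "degree f = K" and K1: "K > 1" and lc: "lead_coeff f > 0"
    and real_crit: "\<forall>z::complex. poly (map_poly of_real (pderiv f)) z = 0 \<longrightarrow> z \<in> \<real>"
  defines "k \<equiv> card (crit_pts f)"
  shows "(k > 0 \<longrightarrow> (\<forall>i\<in>{1..k}.
            (odd i \<longrightarrow> local_min f (real_of_ereal (alpha f i))) \<and>
            (even i \<longrightarrow> local_max f (real_of_ereal (alpha f i)))))
    \<and> odd (k + K)
    \<and> (\<forall>i\<in>{1..k+1}. mono_on (alpha_int f i) (poly f) \<or> antimono_on (alpha_int f i) (poly f))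
    \<and> (\<forall>i\<in>{1..k+1}.
         (falpha f i * falpha f (i - 1) \<ge> 0 \<longrightarrow> (\<forall>x\<in>alpha_int f i. poly f x \<noteq> 0)) \<and>
         (falpha f i * falpha f (i - 1) < 0 \<longrightarrow>
            (\<exists>!x. x \<in> alpha_int f i \<and> poly f x = 0) \<and>
            (\<forall>x\<in>alpha_int f i. poly f x = 0 \<longrightarrow> order x f = 1 \<or> inflection_point f x)))
    \<and> ((\<forall>\<beta>. poly (pderiv f) \<beta> = 0 \<and> order \<beta> (pderiv f) > 1 \<longrightarrow> poly f \<beta> = 0) \<longrightarrow>
         (\<forall>i\<in>{1..k+1}. falpha f i * falpha f (i - 1) \<ge> 0 \<longrightarrow>
            (\<forall>x\<in>alpha_int f i. poly (pderiv f) x \<noteq> 0)))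
    \<and> ((\<forall>z::complex. poly (map_poly of_real f) z = 0 \<longrightarrow> z \<in> \<real>) \<longleftrightarrow>
         S_sum f MInfty PInfty = 1)"
proof -
  interpret crit_poly f using deg K1 lc by unfold_locales simp_all
  have "S_sum f MInfty PInfty = int (size (proots f)) - int (K - 1)"
    using S_sum_MInfty_PInfty[OF f_nonzero pderiv_nonzero] deg real_crit
      all_roots_real_iff_size_proots[OF pderiv_nonzero] by (simp add: degree_pderiv)
  then have real_roots: "(\<forall>z::complex. poly (map_poly of_real f) z = 0 \<longrightarrow> z \<in> \<real>) \<longleftrightarrow>
      S_sum f MInfty PInfty = 1"
    using all_roots_real_iff_size_proots[OF f_nonzero] deg K1 by auto
  show ?thesis
    unfolding k_def
  proof (intro conjI impI ballI)
    show "odd (card (crit_pts f) + K)" using odd_card_crit_pts_plus_degree deg by simp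
  qed (use alpha_local_extremum mono_or_antimono_on_alpha_int zeros_on_alpha_int
      simple_root_or_inflection_point[OF f_nonzero] alpha_int_crit_count(1)
      pderiv_nonzero_on_alpha_int real_roots in auto)
qed

end
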